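(* Assume the setting below and one of: (g) general missingness ($M_i(1),M_i(0)\in\{0,1\}$ arbitrary constants, possibly depending on the potential outcomes); (mp) $M_i(1)\ge M_i(0)$ for all $i$; (mn) $M_i(1)\le M_i(0)$ for all $i$. For $\boldsymbol\delta\in\mathbb R^n$ define $\tilde{\boldsymbol Y}^{\square}_{\boldsymbol Z,\boldsymbol\delta}(0)\in\overline{\mathbb R}^n$, $\square\in\{\texttt g,\texttt{mp},\texttt{mn}\}$, coordinatewise by: for $Z_i=1,M_i=1$ all three equal $Y_i-\delta_i$; for $Z_i=0,M_i=1$ all three equal $Y_i$; for $Z_i=1,M_i=0$ they equal $-\infty$ ($\texttt g$), $+\infty$ ($\texttt{mp}$), $-\infty$ ($\texttt{mn}$); for $Z_i=0,M_i=0$ they equal $+\infty$ ($\texttt g$), $+\infty$ ($\texttt{mp}$), $-\infty$ ($\texttt{mn}$). Let $\mathcal J=\{i:Z_i=M_i=1\}$, $n_{11}=|\mathcal J|$, and write $\mathcal J=\{j_1,\dots,j_{n_{11}}\}$ with $\psi_{j_{l+1},j_l}(Y_{j_{l+1}},Y_{j_l})=1$ for $1\le l<n_{11}$; for $1\le L\le n_{11}$ let $\mathcal J_L=\{j_{n_{11}-L+1},\dots,j_{n_{11}}\}$ and $\mathcal J_0=\emptyset$. Fix $\kappa>0$. For $1\le k\le n_1$, $c\in\mathbb R$ define $\boldsymbol\xi_{k,c}\in\mathbb R^n$ by $\xi_{k,c,i}=\max_{l:Z_l=M_l=1}Y_l-\min_{l:Z_l=0,M_l=1}Y_l+\kappa$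 if $i\in\mathcal J_{\min\{n_1-k,n_{11}\}}$ and $\xi_{k,c,i}=c$ otherwise. Then, with $\square$ the label of the assumed mechanism, $$\tilde p^{\square}_{\texttt t,k,c}:=G_{\mathrm R,\phi}\big(t_{\mathrm R,\phi}(\boldsymbol Z,\tilde{\boldsymbol Y}^{\square}_{\boldsymbol Z,\boldsymbol\xi_{k,c}}(0))\big)$$ is a valid p-value for $H^{\texttt t}_{k,c}:\sum_{i=1}^nZ_i\mathbf 1\{\tau_i>c\}\le n_1-k$ (equivalently, the $k$-th smallest individual effect among treated units is $\le c$), in the sense that $\mathbb P\big(\tilde p^{\square}_{\texttt t,k,c}\le\alpha\text{ and }H^{\texttt t}_{k,c}\text{ holds}\big)\le\alpha$ for all $\alpha\in(0,1)$.
   Context: There are $n$ units. Unit $i$ has fixed potential outcomes $Y_i^\star(0),Y_i^\star(1)\in\mathbb R$ and fixed potential missingness indicators $M_i(0),M_i(1)\in\{0,1\}$; $\tau_i=Y_i^\star(1)-Y_i^\star(0)$. The assignment $\boldsymbol Z\in\{0,1\}^n$ is drawn from a completely randomized experiment (CRE): for fixed positive integers $n_1,n_0$, $n_1+n_0=n$, $\boldsymbol Z$ is uniform over vectors in $\{0,1\}^n$ with exactly $n_1$ ones, independently of all potential outcomes and missingness indicators; probabilities are over $\boldsymbol Z$. Observed missingness $M_i=Z_iM_i(1)+(1-Z_i)M_i(0)$; the realized outcome $Z_iY_i^\star(1)+(1-Z_i)Y_i^\star(0)$ is observed, and denoted $Y_i$, only when $M_i=1$. The null $H^{\texttt t}_{k,c}$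 is an event depending on $\boldsymbol Z$. $\overline{\mathbb R}=\mathbb R\cup\{\pm\infty\}$; $\psi_{i,j}(y,y')=\mathbf 1\{y>y'\}+\mathbf 1\{y=y'\}\mathbf 1\{i\ge j\}$; $\mathrm{rank}_i(\boldsymbol y)=\sum_j\psi_{i,j}(y_i,y_j)$. $\phi$ is a fixed nondecreasing real function on the nonnegative integers. $t_{\mathrm R,\phi}(\boldsymbol z,\boldsymbol y)$ is either $\sum_i z_i\phi(\mathrm{rank}_i(\boldsymbol y))$ or $\sum_i z_i\phi\big(\sum_j(1-z_j)\psi_{i,j}(y_i,y_j)\big)$; the result holds for either. $G_{\mathrm R,\phi}(c)=\mathbb P(t_{\mathrm R,\phi}(\boldsymbol A,\boldsymbol y_0)\ge c)$ with $\boldsymbol A$ from the CRE and $\boldsymbol y_0\in\mathbb R^n$ any fixed vector (independent of $\boldsymbol y_0$). *)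

theory Defs
  imports Main "HOL-Library.Extended_Real"
begin

text \<open>Units are indexed by {0..<n}. An assignment is the set of treated units.\<close>

datatype mechanism = Mech_g | Mech_mp | Mech_mn

datatype stat_form = Rank_All | Rank_Ctrl

definition psi :: "nat \<Rightarrow> nat \<Rightarrow> 'a::linorder \<Rightarrow> 'a \<Rightarrow> nat" where
  "psi i j y y' = (if y > y' then 1 else if y = y' \<and> i \<ge> j then 1 else 0)"

definition rank :: "nat \<Rightarrow> (nat \<Rightarrow> 'a::linorder) \<Rightarrow> nat \<Rightarrow> nat" where
  "rank n y i = (\<Sum>j<n. psi i j (y i) (y j))"

definition tstat :: "stat_form \<Rightarrow> (nat \<Rightarrow> real) \<Rightarrow> nat \<Rightarrow> nat set \<Rightarrow> (nat \<Rightarrow> 'a::linorder) \<Rightarrow> real" where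
  "tstat form phi n Z y =
     (case form of
        Rank_All \<Rightarrow> (\<Sum>i\<in>{..<n} \<inter> Z. phi (rank n y i))
      | Rank_Ctrl \<Rightarrow> (\<Sum>i\<in>{..<n} \<inter> Z. phi (\<Sum>j\<in>{..<n} - Z. psi i j (y i) (y j))))"

definition cre_space :: "nat \<Rightarrow> nat \<Rightarrow> nat set set" where
  "cre_space n n1 = {Z. Z \<subseteq> {..<n} \<and> card Z = n1}"

definition prob_cre :: "nat \<Rightarrow> nat \<Rightarrow> (nat set \<Rightarrow> bool) \<Rightarrow> real" where
  "prob_cre n n1 P = real (card {Z \<in> cre_space n n1. P Z}) / real (card (cre_space n n1))"

text \<open>Null distribution tail G_{R,phi}(c), computed at a fixed real vector y0.\<close>
definition G_tail :: "stat_form \<Rightarrow> (nat \<Rightarrow> real) \<Rightarrow> nat \<Rightarrow> nat \<Rightarrow> (nat \<Rightarrow> real) \<Rightarrow> real \<Rightarrow> real" where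
  "G_tail form phi n n1 y0 c = prob_cre n n1 (\<lambda>A. tstat form phi n A (\<lambda>i. ereal (y0 i)) \<ge> c)"

text \<open>Observed missingness indicator M_i (True = outcome observed) and realized outcome.\<close>
definition obsM :: "(nat \<Rightarrow> bool) \<Rightarrow> (nat \<Rightarrow> bool) \<Rightarrow> nat set \<Rightarrow> nat \<Rightarrow> bool" where
  "obsM M1 M0 Z i = (if i \<in> Z then M1 i else M0 i)"

definition obsY :: "(nat \<Rightarrow> real) \<Rightarrow> (nat \<Rightarrow> real) \<Rightarrow> nat set \<Rightarrow> nat \<Rightarrow> real" where
  "obsY Y1 Y0 Z i = (if i \<in> Z then Y1 i else Y0 i)"

definition Ytilde :: "mechanism \<Rightarrow> (nat \<Rightarrow> real) \<Rightarrow> (nat \<Rightarrow> real) \<Rightarrow> (nat \<Rightarrow> bool) \<Rightarrow> (nat \<Rightarrow> bool)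
    \<Rightarrow> nat set \<Rightarrow> (nat \<Rightarrow> real) \<Rightarrow> nat \<Rightarrow> ereal" where
  "Ytilde mech Y1 Y0 M1 M0 Z delta i =
     (if i \<in> Z then
        (if obsM M1 M0 Z i then ereal (obsY Y1 Y0 Z i - delta i)
         else (case mech of Mech_g \<Rightarrow> MInfty | Mech_mp \<Rightarrow> PInfty | Mech_mn \<Rightarrow> MInfty))
      else
        (if obsM M1 M0 Z i then ereal (obsY Y1 Y0 Z i)
         else (case mech of Mech_g \<Rightarrow> PInfty | Mech_mp \<Rightarrow> PInfty | Mech_mn \<Rightarrow> MInfty)))"

definition Jset :: "nat \<Rightarrow> (nat \<Rightarrow> bool) \<Rightarrow> (nat \<Rightarrow> bool) \<Rightarrow> nat set \<Rightarrow> nat set" where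
  "Jset n M1 M0 Z = {i. i < n \<and> i \<in> Z \<and> obsM M1 M0 Z i}"

text \<open>J_L: the L last elements of J in the order j_1,...,j_{n11} (increasing in (Y, index)),
  i.e. the elements whose position (rank within J) exceeds n11 - L.\<close>
definition JL :: "nat \<Rightarrow> (nat \<Rightarrow> real) \<Rightarrow> (nat \<Rightarrow> real) \<Rightarrow> (nat \<Rightarrow> bool) \<Rightarrow> (nat \<Rightarrow> bool)
    \<Rightarrow> nat set \<Rightarrow> nat \<Rightarrow> nat set" where
  "JL n Y1 Y0 M1 M0 Z L =
     (let J = Jset n M1 M0 Z; Y = obsY Y1 Y0 Z in
      {i \<in> J. (\<Sum>j\<in>J. psi i j (Y i) (Y j)) > card J - L})"

definition xi :: "nat \<Rightarrow> nat \<Rightarrow> (nat \<Rightarrow> real) \<Rightarrow> (nat \<Rightarrow> real) \<Rightarrow> (nat \<Rightarrow> bool) \<Rightarrow> (nat \<Rightarrow> bool)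
    \<Rightarrow> nat set \<Rightarrow> real \<Rightarrow> nat \<Rightarrow> real \<Rightarrow> nat \<Rightarrow> real" where
  "xi n n1 Y1 Y0 M1 M0 Z kappa k c i =
     (let J = Jset n M1 M0 Z; Y = obsY Y1 Y0 Z in
      if i \<in> JL n Y1 Y0 M1 M0 Z (min (n1 - k) (card J))
      then Max (Y ` J) - Min (Y ` {l. l < n \<and> l \<notin> Z \<and> obsM M1 M0 Z l}) + kappa
      else c)"

definition pval :: "stat_form \<Rightarrow> (nat \<Rightarrow> real) \<Rightarrow> mechanism \<Rightarrow> nat \<Rightarrow> nat \<Rightarrow> (nat \<Rightarrow> real)
    \<Rightarrow> (nat \<Rightarrow> real) \<Rightarrow> (nat \<Rightarrow> real) \<Rightarrow> (nat \<Rightarrow> bool) \<Rightarrow> (nat \<Rightarrow> bool) \<Rightarrow> real \<Rightarrow> nat \<Rightarrow> real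
    \<Rightarrow> nat set \<Rightarrow> real" where
  "pval form phi mech n n1 y0 Y1 Y0 M1 M0 kappa k c Z =
     G_tail form phi n n1 y0
       (tstat form phi n Z (Ytilde mech Y1 Y0 M1 M0 Z (xi n n1 Y1 Y0 M1 M0 Z kappa k c)))"

definition Hnull :: "nat \<Rightarrow> nat \<Rightarrow> (nat \<Rightarrow> real) \<Rightarrow> (nat \<Rightarrow> real) \<Rightarrow> nat \<Rightarrow> real \<Rightarrow> nat set \<Rightarrow> bool" where
  "Hnull n n1 Y1 Y0 k c Z \<longleftrightarrow> card {i. i < n \<and> i \<in> Z \<and> Y1 i - Y0 i > c} \<le> n1 - k"

end

theory Submission
  imports Defs "HOL-Library.Product_Lexorder"
begin

text \<open>
  Fix an assignment Z under which the null holds, and let w be Y(0), except that under (mp) it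
  is +\<infinity> where M(1) = 0 and under (mn) it is -\<infinity> where M(0) = 0; w does not depend on Z.
  The imputed vector is at least w on control units, and at most w on treated units except on
  the at most n1 - k observed units with effect above c. Those are matched injectively with
  units of J_L, which receive the shift \<xi> and so fall below every observed control. Hence, up to
  a permutation of the treated units, every treated unit has no more controls below it under the
  imputation than under w, and comparing order statistics gives t(Z, imputed) \<le> t(Z, w) for both
  rank statistics. A rank statistic depends on its argument only through the induced ordering,
  so G is also the tail function of t(A, w) for a random assignment A. The p-value therefore
  dominates the tail probability of t(., w) at its own random argument, a valid p-value.
\<close>

lemma card_preimage_bij_betw:
  assumes "bij_betw f A B" "S \<subseteq> B"
  shows "card {x\<in>A. f x \<in> S} = card S"
proof -
  have "f ` {x\<in>A. f x \<in> S} = S"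
    using assms bij_betw_imp_surj_on by fastforce
  then have "bij_betw f {x\<in>A. f x \<in> S} S"
    using assms(1) by (auto intro: bij_betw_subset)
  then show ?thesis by (rule bij_betw_same_card)
qed

text \<open>
  Since a ranks Z and b is comonotone with a, the value b i is the (a i)-th smallest value of b.
  So if b is dominated by b' up to a permutation of Z, then so is every order statistic.
\<close>

lemma order_statistic_le:
  assumes Z: "finite Z"
    and a: "bij_betw a Z {1..card Z}" and a': "bij_betw a' Z {1..card Z}"
    and b: "\<And>i i'. i \<in> Z \<Longrightarrow> i' \<in> Z \<Longrightarrow> a i \<le> a i' \<Longrightarrow> b i \<le> b i'"
    and b': "\<And>i i'. i \<in> Z \<Longrightarrow> i' \<in> Z \<Longrightarrow> a' i \<le> a' i' \<Longrightarrow> b' i \<le> b' i'"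
    and \<sigma>: "bij_betw \<sigma> Z Z" and dom: "\<And>i. i \<in> Z \<Longrightarrow> b i \<le> b' (\<sigma> i)"
    and i: "i \<in> Z" "i' \<in> Z" "a i = a' i'"
  shows "b i \<le> (b' i' :: 'b::linorder)"
proof (rule ccontr)
  assume "\<not> b i \<le> b' i'"
  define k where "k = a i"
  have k: "k \<in> {1..card Z}" unfolding k_def using a i(1) by (auto dest: bij_betwE)
  define S where "S = {j\<in>Z. a' j \<in> {1..k}}"
  have "card S = k" unfolding S_def using card_preimage_bij_betw[OF a', of "{1..k}"] k by simp
  moreover have "S \<subseteq> Z" unfolding S_def by blast
  ultimately have "k = card {j\<in>Z. \<sigma> j \<in> S}" using card_preimage_bij_betw[OF \<sigma>] by simp
  also have "\<dots> \<le> card {j\<in>Z. a j \<in> {1..<k}}"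
  proof (intro card_mono subsetI)
    show "finite {j\<in>Z. a j \<in> {1..<k}}" using Z by simp
  next
    fix j assume "j \<in> {j\<in>Z. \<sigma> j \<in> S}"
    then have j: "j \<in> Z" "\<sigma> j \<in> S" by auto
    have "b j \<le> b' (\<sigma> j)" using dom j(1) .
    also have "\<dots> \<le> b' i'" using b' j(2) i unfolding S_def k_def by auto
    also have "\<dots> < b i" using \<open>\<not> b i \<le> b' i'\<close> by simp
    finally have "\<not> a i \<le> a j" using b i(1) j(1) by fastforce
    moreover have "a j \<in> {1..card Z}" using a j(1) by (auto dest: bij_betwE)
    ultimately show "j \<in> {j\<in>Z. a j \<in> {1..<k}}" using j(1) unfolding k_def by simp
  qed
  also have "\<dots> = k - 1"
    using card_preimage_bij_betw[OF a, of "{1..<k}"] k by (simp add: subset_iff)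
  finally show False using k by auto
qed

lemma sum_comonotone_le:
  fixes f :: "nat \<Rightarrow> 'b::linorder \<Rightarrow> 'c::ordered_comm_monoid_add"
  assumes Z: "finite Z"
    and a: "bij_betw a Z {1..card Z}" and a': "bij_betw a' Z {1..card Z}"
    and b: "\<And>i i'. i \<in> Z \<Longrightarrow> i' \<in> Z \<Longrightarrow> a i \<le> a i' \<Longrightarrow> b i \<le> b i'"
    and b': "\<And>i i'. i \<in> Z \<Longrightarrow> i' \<in> Z \<Longrightarrow> a' i \<le> a' i' \<Longrightarrow> b' i \<le> b' i'"
    and \<sigma>: "bij_betw \<sigma> Z Z" and dom: "\<And>i. i \<in> Z \<Longrightarrow> b i \<le> b' (\<sigma> i)"
    and f: "\<And>r. mono (f r)"
  shows "(\<Sum>i\<in>Z. f (a i) (b i)) \<le> (\<Sum>i\<in>Z. f (a' i) (b' i))"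
proof -
  define \<tau> where "\<tau> = inv_into Z a \<circ> a'"
  have \<tau>: "bij_betw \<tau> Z Z"
    unfolding \<tau>_def using a' bij_betw_inv_into[OF a] by (rule bij_betw_trans)
  have a_\<tau>: "a (\<tau> i) = a' i" if "i \<in> Z" for i
    unfolding \<tau>_def using bij_betw_inv_into_right[OF a] bij_betwE[OF a'] that by simp
  have "(\<Sum>i\<in>Z. f (a i) (b i)) = (\<Sum>i\<in>Z. f (a (\<tau> i)) (b (\<tau> i)))"
    by (rule sum.reindex_bij_betw[OF \<tau>, symmetric])
  also have "\<dots> \<le> (\<Sum>i\<in>Z. f (a' i) (b' i))"
  proof (rule sum_mono)
    fix i assume "i \<in> Z"
    moreover have "\<tau> i \<in> Z" using bij_betwE[OF \<tau>] \<open>i \<in> Z\<close> by blast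
    ultimately have "b (\<tau> i) \<le> b' i"
      using order_statistic_le[OF Z a a' _ _ \<sigma>, where b = b and b' = b' and i = "\<tau> i" and i' = i]
        b b' dom a_\<tau> by blast
    then show "f (a (\<tau> i)) (b (\<tau> i)) \<le> f (a' i) (b' i)"
      using a_\<tau> \<open>i \<in> Z\<close> f by (simp add: monoD)
  qed
  finally show ?thesis .
qed

definition preceq :: "(nat \<Rightarrow> 'a::linorder) \<Rightarrow> nat \<Rightarrow> nat \<Rightarrow> bool" where
  "preceq y j i \<longleftrightarrow> (y j, j) \<le> (y i, i)"

definition rank_in :: "nat set \<Rightarrow> (nat \<Rightarrow> 'a::linorder) \<Rightarrow> nat \<Rightarrow> nat" where
  "rank_in S y i = card {j\<in>S. preceq y j i}"

lemma preceq_iff: "preceq y j i \<longleftrightarrow> y j < y i \<or> (y j = y i \<and> j \<le> i)"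
  by (auto simp: preceq_def less_eq_prod_def)

lemma psi_eq_preceq: "psi i j (y i) (y j) = of_bool (preceq y j i)"
  by (auto simp: psi_def preceq_iff)

lemma sum_psi_eq_rank_in:
  "finite S \<Longrightarrow> (\<Sum>j\<in>S. psi i j (y i) (y j)) = rank_in S y i"
  by (simp add: psi_eq_preceq rank_in_def Int_def)

lemma preceq_trans: "preceq y i j \<Longrightarrow> preceq y j k \<Longrightarrow> preceq y i k"
  unfolding preceq_def by (rule order_trans)

lemma preceq_antisym: "preceq y i j \<Longrightarrow> preceq y j i \<Longrightarrow> i = j"
  unfolding preceq_def by (metis order_antisym prod.inject)

lemma preceq_linear: "\<not> preceq y i j \<Longrightarrow> preceq y j i"
  unfolding preceq_def by (metis le_cases)

lemma rank_in_le_rank_in: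
  assumes "finite S" "\<And>j. j \<in> S \<Longrightarrow> preceq y j i \<Longrightarrow> preceq y' j l"
  shows "rank_in S y i \<le> rank_in S y' l"
  unfolding rank_in_def using assms by (intro card_mono) auto

lemma rank_in_mono: "finite S \<Longrightarrow> preceq y i i' \<Longrightarrow> rank_in S y i \<le> rank_in S y i'"
  by (rule rank_in_le_rank_in) (auto intro: preceq_trans)

lemma rank_in_less:
  assumes "finite S" "i' \<in> S" "preceq y i i'" "i \<noteq> i'"
  shows "rank_in S y i < rank_in S y i'"
  unfolding rank_in_def
proof (rule psubset_card_mono)
  show "{j \<in> S. preceq y j i} \<subset> {j \<in> S. preceq y j i'}"
    using assms preceq_antisym by (auto simp: preceq_def intro: order_trans)
qed (use assms in simp)

lemma rank_in_le_iff:
  "finite S \<Longrightarrow> i \<in> S \<Longrightarrow> i' \<in> S \<Longrightarrow> rank_in S y i \<le> rank_in S y i' \<longleftrightarrow> preceq y i i'"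
  using rank_in_less[of S i y i'] rank_in_mono[of S y i i'] preceq_linear[of y i i'] by force

lemma rank_in_bij: "finite S \<Longrightarrow> bij_betw (rank_in S y) S {1..card S}"
proof -
  assume S: "finite S"
  have "inj_on (rank_in S y) S"
    by (rule inj_onI) (metis S rank_in_le_iff preceq_antisym order_refl)
  moreover have "rank_in S y ` S \<subseteq> {1..card S}"
  proof
    fix r assume "r \<in> rank_in S y ` S"
    then obtain i where "i \<in> S" "r = rank_in S y i" by blast
    moreover have "i \<in> {j\<in>S. preceq y j i}" using \<open>i \<in> S\<close> by (simp add: preceq_def)
    ultimately show "r \<in> {1..card S}"
      unfolding rank_in_def using S
      by (auto simp: Suc_le_eq card_gt_0_iff intro!: card_mono)
  qed
  ultimately show ?thesis
    using S by (simp add: bij_betw_def card_image card_subset_eq)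
qed

lemma rank_in_Un:
  "finite A \<Longrightarrow> finite B \<Longrightarrow> A \<inter> B = {} \<Longrightarrow> rank_in (A \<union> B) y i = rank_in A y i + rank_in B y i"
  unfolding rank_in_def by (subst card_Un_disjoint[symmetric]) (auto intro: arg_cong[where f = card])

definition score :: "stat_form \<Rightarrow> (nat \<Rightarrow> real) \<Rightarrow> nat \<Rightarrow> nat \<Rightarrow> real" where
  "score form phi r b = (case form of Rank_All \<Rightarrow> phi (r + b) | Rank_Ctrl \<Rightarrow> phi b)"

lemma mono_score: "mono phi \<Longrightarrow> mono (score form phi r)"
  by (cases form) (auto simp: score_def mono_def)

lemma tstat_eq_sum_score:
  assumes Z: "Z \<subseteq> {..<n}"
  shows "tstat form phi n Z y = (\<Sum>i\<in>Z. score form phi (rank_in Z y i) (rank_in ({..<n} - Z) y i))"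
proof -
  have "{..<n} = Z \<union> ({..<n} - Z)" "{..<n} \<inter> Z = Z" using Z by auto
  moreover have "finite Z" using Z finite_subset by blast
  ultimately have "rank n y i = rank_in Z y i + rank_in ({..<n} - Z) y i" for i
    unfolding rank_def by (metis sum_psi_eq_rank_in finite_lessThan rank_in_Un finite_Diff Diff_disjoint)
  then show ?thesis
    using \<open>{..<n} \<inter> Z = Z\<close> by (cases form) (simp_all add: tstat_def score_def sum_psi_eq_rank_in)
qed

lemma rank_in_comonotone:
  assumes "finite Z" "finite S" "i \<in> Z" "i' \<in> Z" "rank_in Z y i \<le> rank_in Z y i'"
  shows "rank_in S y i \<le> rank_in S y i'"
  using assms by (auto simp: rank_in_le_iff intro: rank_in_mono)

lemma tstat_le_of_permutation:
  fixes y :: "nat \<Rightarrow> 'a::linorder" and y' :: "nat \<Rightarrow> 'b::linorder"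
  assumes Z: "Z \<subseteq> {..<n}" and phi: "mono phi" and \<sigma>: "bij_betw \<sigma> Z Z"
    and ctrl: "\<And>i. i \<in> Z \<Longrightarrow> rank_in ({..<n} - Z) y i \<le> rank_in ({..<n} - Z) y' (\<sigma> i)"
  shows "tstat form phi n Z y \<le> tstat form phi n Z y'"
proof -
  have fin: "finite Z" using Z finite_subset by blast
  show ?thesis
    unfolding tstat_eq_sum_score[OF Z]
    by (rule sum_comonotone_le[where b = "rank_in ({..<n} - Z) y" and b' = "rank_in ({..<n} - Z) y'"])
      (use fin rank_in_bij \<sigma> ctrl mono_score phi in \<open>auto intro: rank_in_comonotone[OF fin]\<close>)
qed

lemma exists_exchange_permutation:
  assumes Z: "finite Z" and PQ: "P \<subseteq> Z" "Q \<subseteq> Z" "card P \<le> card Q"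
  obtains \<sigma> where "bij_betw \<sigma> Z Z" "\<And>i. i \<in> Z - (P \<union> Q) \<Longrightarrow> \<sigma> i = i"
    "\<And>i. i \<in> P - Q \<Longrightarrow> \<sigma> i \<in> Q - P" "\<And>i. i \<in> Q \<Longrightarrow> \<sigma> i \<in> P \<union> Q"
proof -
  have fin: "finite P" "finite Q" using PQ Z finite_subset by blast+
  have "card (P - Q) \<le> card (Q - P)"
    using PQ(3) fin by (simp add: card_Diff_subset_Int Int_commute)
  then obtain T where T: "T \<subseteq> Q - P" "card T = card (P - Q)" "finite T"
    by (rule obtain_subset_with_card_n)
  then obtain g where g: "bij_betw g (P - Q) T"
    using fin finite_same_card_bij by (metis finite_Diff)
  define \<sigma> where "\<sigma> i = (if i \<in> P - Q then g i else if i \<in> T then inv_into (P - Q) g i else i)" for i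
  have \<sigma>_P: "\<sigma> i \<in> T" if "i \<in> P - Q" for i
    using that g by (auto simp: \<sigma>_def dest: bij_betwE)
  have \<sigma>_T: "\<sigma> i \<in> P - Q" if "i \<in> T" for i
    using that T(1) bij_betwE[OF bij_betw_inv_into[OF g]] by (auto simp: \<sigma>_def)
  have invol: "\<sigma> (\<sigma> i) = i" for i
  proof -
    consider "i \<in> P - Q" | "i \<in> T" | "i \<notin> P - Q" "i \<notin> T" by blast
    then show ?thesis
    proof cases
      case 1
      then show ?thesis using \<sigma>_P T(1) bij_betw_inv_into_left[OF g] by (auto simp: \<sigma>_def)
    next
      case 2
      then show ?thesis using \<sigma>_T T(1) bij_betw_inv_into_right[OF g] by (auto simp: \<sigma>_def)
    next
      case 3
      then have "\<sigma> i = i" by (auto simp: \<sigma>_def)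
      then show ?thesis by simp
    qed
  qed
  have "\<sigma> ` Z \<subseteq> Z"
    using \<sigma>_P \<sigma>_T T(1) PQ by (force simp: \<sigma>_def)
  then have "bij_betw \<sigma> Z Z"
    using invol by (intro bij_betw_byWitness[where f' = \<sigma>]) auto
  moreover have "\<sigma> i = i" if "i \<in> Z - (P \<union> Q)" for i
    using that T(1) by (auto simp: \<sigma>_def)
  moreover have "\<sigma> i \<in> Q - P" if "i \<in> P - Q" for i
    using \<sigma>_P that T(1) by blast
  moreover have "\<sigma> i \<in> P \<union> Q" if "i \<in> Q" for i
  proof (cases "i \<in> T")
    case True then show ?thesis using \<sigma>_T by blast
  next
    case False then show ?thesis using that T(1) by (simp add: \<sigma>_def)
  qed
  ultimately show thesis by (rule that)
qed

lemma preceq_transfer: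
  assumes "w j \<le> E j" "preceq E j i" "(E i, i) \<le> (w l, l)"
  shows "preceq w j l"
proof -
  have "(w j, j) \<le> (E j, j)" using assms(1) by simp
  also have "\<dots> \<le> (E i, i)" using assms(2) by (simp only: preceq_def)
  also have "\<dots> \<le> (w l, l)" by (fact assms(3))
  finally show ?thesis by (simp only: preceq_def)
qed

text \<open>
  The units of P, where E may exceed w, are matched with units of Q - P; the units of Q lie so
  low under E that every control below them lies below all of P \<union> Q under w.
\<close>

lemma tstat_le_of_exchange:
  fixes E w :: "nat \<Rightarrow> 'a::linorder"
  assumes Z: "Z \<subseteq> {..<n}" and phi: "mono phi"
    and PQ: "P \<subseteq> Z" "Q \<subseteq> Z" "card P \<le> card Q"
    and ctrl: "\<And>j. j \<in> {..<n} - Z \<Longrightarrow> w j \<le> E j"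
    and fixed: "\<And>i. i \<in> Z - (P \<union> Q) \<Longrightarrow> E i \<le> w i"
    and swap: "\<And>i l. i \<in> P - Q \<Longrightarrow> l \<in> Q - P \<Longrightarrow> (E i, i) \<le> (w l, l)"
    and bottom: "\<And>i l j. i \<in> Q \<Longrightarrow> l \<in> P \<union> Q \<Longrightarrow> j \<in> {..<n} - Z \<Longrightarrow> E j \<le> E i \<Longrightarrow> w j < w l"
  shows "tstat form phi n Z E \<le> tstat form phi n Z w"
proof -
  obtain \<sigma> where \<sigma>: "bij_betw \<sigma> Z Z" "\<And>i. i \<in> Z - (P \<union> Q) \<Longrightarrow> \<sigma> i = i"
    "\<And>i. i \<in> P - Q \<Longrightarrow> \<sigma> i \<in> Q - P" "\<And>i. i \<in> Q \<Longrightarrow> \<sigma> i \<in> P \<union> Q"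
    using exists_exchange_permutation[OF finite_subset[OF Z finite_lessThan] PQ] by blast
  have "rank_in ({..<n} - Z) E i \<le> rank_in ({..<n} - Z) w (\<sigma> i)" if i: "i \<in> Z" for i
  proof (rule rank_in_le_rank_in)
    fix j assume j: "j \<in> {..<n} - Z" "preceq E j i"
    have transfer: "preceq w j l" if "(E i, i) \<le> (w l, l)" for l
      using preceq_transfer[where w = w and E = E, OF ctrl[OF j(1)] j(2) that] .
    consider "i \<in> Z - (P \<union> Q)" | "i \<in> P - Q" | "i \<in> Q" using i by blast
    then show "preceq w j (\<sigma> i)"
    proof cases
      case 1
      then show ?thesis using transfer fixed \<sigma>(2) by simp
    next
      case 2
      then show ?thesis using transfer swap \<sigma>(3) by blast
    next
      case 3
      then have "w j < w (\<sigma> i)" using bottom \<sigma>(4) j by (auto simp: preceq_iff)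
      then show ?thesis by (simp add: preceq_iff)
    qed
  qed simp
  then show ?thesis using tstat_le_of_permutation[OF Z phi \<sigma>(1)] by blast
qed

lemma exists_rank_preserving_permutation:
  fixes y :: "nat \<Rightarrow> 'a::linorder" and y' :: "nat \<Rightarrow> 'b::linorder"
  obtains \<pi> where "bij_betw \<pi> {..<n} {..<n}"
    "\<And>i j. i < n \<Longrightarrow> j < n \<Longrightarrow> preceq y' (\<pi> j) (\<pi> i) \<longleftrightarrow> preceq y j i"
proof -
  define r where "r = rank_in {..<n} y"
  define r' where "r' = rank_in {..<n} y'"
  have r: "bij_betw r {..<n} {1..n}" and r': "bij_betw r' {..<n} {1..n}"
    unfolding r_def r'_def using rank_in_bij[of "{..<n}"] by simp_all
  define \<pi> where "\<pi> = inv_into {..<n} r' \<circ> r"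
  have \<pi>: "bij_betw \<pi> {..<n} {..<n}"
    unfolding \<pi>_def using r bij_betw_inv_into[OF r'] by (rule bij_betw_trans)
  have r'_\<pi>: "r' (\<pi> i) = r i" if "i < n" for i
    unfolding \<pi>_def using that bij_betw_inv_into_right[OF r'] bij_betwE[OF r] by auto
  have "preceq y' (\<pi> j) (\<pi> i) \<longleftrightarrow> preceq y j i" if "i < n" "j < n" for i j
  proof -
    have "\<pi> i < n" "\<pi> j < n" using that bij_betwE[OF \<pi>] by auto
    then have "preceq y' (\<pi> j) (\<pi> i) \<longleftrightarrow> r' (\<pi> j) \<le> r' (\<pi> i)"
      unfolding r'_def by (simp add: rank_in_le_iff)
    also have "\<dots> \<longleftrightarrow> r j \<le> r i" using that r'_\<pi> by simp
    also have "\<dots> \<longleftrightarrow> preceq y j i" unfolding r_def using that by (simp add: rank_in_le_iff)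
    finally show ?thesis .
  qed
  with \<pi> show thesis by (rule that)
qed

context
  fixes n :: nat and \<pi> :: "nat \<Rightarrow> nat" and y :: "nat \<Rightarrow> 'a::linorder" and y' :: "nat \<Rightarrow> 'b::linorder"
  assumes \<pi>: "bij_betw \<pi> {..<n} {..<n}"
    and preserves: "\<And>i j. i < n \<Longrightarrow> j < n \<Longrightarrow> preceq y' (\<pi> j) (\<pi> i) \<longleftrightarrow> preceq y j i"
begin

lemma rank_in_permute:
  assumes "S \<subseteq> {..<n}" "i < n"
  shows "rank_in (\<pi> ` S) y' (\<pi> i) = rank_in S y i"
proof -
  have "preceq y' (\<pi> j) (\<pi> i) \<longleftrightarrow> preceq y j i" if "j \<in> S" for j
    using that assms by (intro preserves) auto
  then have "{j\<in>\<pi> ` S. preceq y' j (\<pi> i)} = \<pi> ` {j\<in>S. preceq y j i}"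
    by auto
  moreover have "inj_on \<pi> {j\<in>S. preceq y j i}"
    using assms by (intro inj_on_subset[OF bij_betw_imp_inj_on[OF \<pi>]]) auto
  ultimately show ?thesis unfolding rank_in_def by (simp add: card_image)
qed

lemma tstat_permute:
  assumes A: "A \<subseteq> {..<n}"
  shows "tstat form phi n (\<pi> ` A) y' = tstat form phi n A y"
proof -
  have inj: "inj_on \<pi> A" using A by (rule inj_on_subset[OF bij_betw_imp_inj_on[OF \<pi>]])
  have \<pi>A: "\<pi> ` A \<subseteq> {..<n}" using A bij_betw_imp_surj_on[OF \<pi>] by blast
  have "{..<n} - \<pi> ` A = \<pi> ` ({..<n} - A)"
    using inj_on_image_set_diff[OF bij_betw_imp_inj_on[OF \<pi>], of "{..<n}" A] A
      bij_betw_imp_surj_on[OF \<pi>] by auto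
  then have "tstat form phi n (\<pi> ` A) y'
      = (\<Sum>i\<in>A. score form phi (rank_in (\<pi> ` A) y' (\<pi> i)) (rank_in (\<pi> ` ({..<n} - A)) y' (\<pi> i)))"
    by (simp add: tstat_eq_sum_score[OF \<pi>A] sum.reindex[OF inj])
  also have "\<dots> = (\<Sum>i\<in>A. score form phi (rank_in A y i) (rank_in ({..<n} - A) y i))"
    using A by (intro sum.cong refl) (simp add: rank_in_permute subset_iff)
  also have "\<dots> = tstat form phi n A y"
    by (rule tstat_eq_sum_score[OF A, symmetric])
  finally show ?thesis .
qed

end

lemma card_cre_space_permute:
  assumes \<pi>: "bij_betw \<pi> {..<n} {..<n}"
  shows "card {A\<in>cre_space n n1. P (\<pi> ` A)} = card {A\<in>cre_space n n1. P A}"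
proof -
  have Pow: "bij_betw (image \<pi>) (Pow {..<n}) (Pow {..<n})"
    using \<pi> by (rule bij_betw_image_Pow)
  have card_\<pi>: "card (\<pi> ` A) = card A" if "A \<subseteq> {..<n}" for A
    using that by (intro card_image inj_on_subset[OF bij_betw_imp_inj_on[OF \<pi>]])
  have "image \<pi> ` {A\<in>cre_space n n1. P (\<pi> ` A)} = {A\<in>cre_space n n1. P A}"
  proof (intro equalityI subsetI)
    fix B assume B: "B \<in> {A\<in>cre_space n n1. P A}"
    then have "B \<in> image \<pi> ` Pow {..<n}"
      using bij_betw_imp_surj_on[OF Pow] by (auto simp: cre_space_def)
    then obtain A where "A \<subseteq> {..<n}" "B = \<pi> ` A" by auto
    with B show "B \<in> image \<pi> ` {A\<in>cre_space n n1. P (\<pi> ` A)}"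
      using card_\<pi> by (auto simp: cre_space_def)
  next
    fix B assume "B \<in> image \<pi> ` {A\<in>cre_space n n1. P (\<pi> ` A)}"
    then obtain A where "A \<subseteq> {..<n}" "card A = n1" "P B" "B = \<pi> ` A"
      by (auto simp: cre_space_def)
    moreover have "\<pi> ` A \<subseteq> {..<n}" using \<open>A \<subseteq> {..<n}\<close> bij_betw_imp_surj_on[OF \<pi>] by blast
    ultimately show "B \<in> {A\<in>cre_space n n1. P A}" using card_\<pi> by (simp add: cre_space_def)
  qed
  moreover have "{A\<in>cre_space n n1. P (\<pi> ` A)} \<subseteq> Pow {..<n}" by (auto simp: cre_space_def)
  ultimately have "bij_betw (image \<pi>) {A\<in>cre_space n n1. P (\<pi> ` A)} {A\<in>cre_space n n1. P A}"
    by (rule bij_betw_subset[OF Pow, rotated])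
  then show ?thesis by (rule bij_betw_same_card)
qed

lemma prob_cre_tstat_invariant:
  fixes y :: "nat \<Rightarrow> 'a::linorder" and y' :: "nat \<Rightarrow> 'b::linorder"
  shows "prob_cre n n1 (\<lambda>A. x \<le> tstat form phi n A y) = prob_cre n n1 (\<lambda>A. x \<le> tstat form phi n A y')"
proof -
  obtain \<pi> where \<pi>: "bij_betw \<pi> {..<n} {..<n}"
    and preserves: "\<And>i j. i < n \<Longrightarrow> j < n \<Longrightarrow> preceq y' (\<pi> j) (\<pi> i) \<longleftrightarrow> preceq y j i"
    using exists_rank_preserving_permutation[where n = n and y = y and y' = y'] by blast
  have "tstat form phi n (\<pi> ` A) y' = tstat form phi n A y" if "A \<in> cre_space n n1" for A
    using that tstat_permute[OF \<pi> preserves] by (simp add: cre_space_def)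
  then have "{A\<in>cre_space n n1. x \<le> tstat form phi n A y} = {A\<in>cre_space n n1. x \<le> tstat form phi n (\<pi> ` A) y'}"
    by auto
  then show ?thesis
    unfolding prob_cre_def
    using card_cre_space_permute[OF \<pi>, of n1 "\<lambda>A. x \<le> tstat form phi n A y'"] by simp
qed

lemma JL_eq_rank_in:
  "JL n Y1 Y0 M1 M0 Z L = {i \<in> Jset n M1 M0 Z.
     card (Jset n M1 M0 Z) - L < rank_in (Jset n M1 M0 Z) (obsY Y1 Y0 Z) i}"
  unfolding JL_def Let_def by (simp add: sum_psi_eq_rank_in Jset_def)

lemma card_JL:
  assumes "L \<le> card (Jset n M1 M0 Z)"
  shows "card (JL n Y1 Y0 M1 M0 Z L) = L"
proof -
  let ?J = "Jset n M1 M0 Z"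
  have fin: "finite ?J" by (simp add: Jset_def)
  have "JL n Y1 Y0 M1 M0 Z L = {i \<in> ?J. rank_in ?J (obsY Y1 Y0 Z) i \<in> {card ?J - L<..card ?J}}"
    using bij_betwE[OF rank_in_bij[OF fin]] by (auto simp: JL_eq_rank_in)
  also have "card \<dots> = card {card ?J - L<..card ?J}"
    by (rule card_preimage_bij_betw[OF rank_in_bij[OF fin]]) auto
  finally show ?thesis using assms by simp
qed

lemma preceq_of_notin_JL:
  assumes "i \<in> Jset n M1 M0 Z - JL n Y1 Y0 M1 M0 Z L" "l \<in> JL n Y1 Y0 M1 M0 Z L"
  shows "preceq (obsY Y1 Y0 Z) i l"
proof -
  let ?J = "Jset n M1 M0 Z"
  have "rank_in ?J (obsY Y1 Y0 Z) i \<le> rank_in ?J (obsY Y1 Y0 Z) l"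
    using assms by (auto simp: JL_eq_rank_in)
  then show ?thesis
    using assms by (simp add: rank_in_le_iff JL_eq_rank_in Jset_def)
qed

definition Y0_envelope :: "mechanism \<Rightarrow> (nat \<Rightarrow> real) \<Rightarrow> (nat \<Rightarrow> bool) \<Rightarrow> (nat \<Rightarrow> bool) \<Rightarrow> nat \<Rightarrow> ereal" where
  "Y0_envelope mech Y0 M1 M0 i = (case mech of
      Mech_g \<Rightarrow> ereal (Y0 i)
    | Mech_mp \<Rightarrow> (if M1 i then ereal (Y0 i) else PInfty)
    | Mech_mn \<Rightarrow> (if M0 i then ereal (Y0 i) else MInfty))"

locale imputation =
  fixes n n1 k :: nat and Y1 Y0 :: "nat \<Rightarrow> real" and M1 M0 :: "nat \<Rightarrow> bool"
    and mech :: mechanism and kappa c :: real and Z :: "nat set"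
  assumes treated: "Z \<subseteq> {..<n}"
    and mp: "mech = Mech_mp \<longrightarrow> (\<forall>i<n. M0 i \<longrightarrow> M1 i)"
    and mn: "mech = Mech_mn \<longrightarrow> (\<forall>i<n. M1 i \<longrightarrow> M0 i)"
    and kappa_pos: "0 < kappa"
begin

abbreviation "observed_treated \<equiv> Jset n M1 M0 Z"
abbreviation "shifted \<equiv> JL n Y1 Y0 M1 M0 Z (min (n1 - k) (card observed_treated))"
abbreviation "large_effect \<equiv> {i \<in> observed_treated. c < Y1 i - Y0 i}"
abbreviation "shift \<equiv> Max (obsY Y1 Y0 Z ` observed_treated)
    - Min (obsY Y1 Y0 Z ` {l. l < n \<and> l \<notin> Z \<and> obsM M1 M0 Z l}) + kappa"
abbreviation "imputed \<equiv> Ytilde mech Y1 Y0 M1 M0 Z (xi n n1 Y1 Y0 M1 M0 Z kappa k c)"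
abbreviation "envelope \<equiv> Y0_envelope mech Y0 M1 M0"

lemma observed_treated_iff: "i \<in> observed_treated \<longleftrightarrow> i \<in> Z \<and> M1 i"
  using treated by (auto simp: Jset_def obsM_def)

lemma shifted_subset: "shifted \<subseteq> observed_treated"
  by (auto simp: JL_eq_rank_in)

lemma imputed_observed_treated:
  "i \<in> observed_treated \<Longrightarrow> imputed i = ereal (Y1 i - (if i \<in> shifted then shift else c))"
  by (simp add: observed_treated_iff Ytilde_def obsM_def obsY_def xi_def Let_def)

lemma imputed_control:
  "i \<notin> Z \<Longrightarrow> imputed i = (if M0 i then ereal (Y0 i)
     else case mech of Mech_g \<Rightarrow> PInfty | Mech_mp \<Rightarrow> PInfty | Mech_mn \<Rightarrow> MInfty)"
  by (simp add: Ytilde_def obsM_def obsY_def)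

lemma envelope_observed: "i \<in> observed_treated \<Longrightarrow> envelope i = ereal (Y0 i)"
  using mn treated by (cases mech) (auto simp: observed_treated_iff Y0_envelope_def)

lemma envelope_le_imputed_control: "j \<in> {..<n} - Z \<Longrightarrow> envelope j \<le> imputed j"
  using mp by (auto simp: imputed_control Y0_envelope_def split: mechanism.split)

lemma imputed_le_envelope:
  assumes "i \<in> Z - (large_effect \<union> shifted)"
  shows "imputed i \<le> envelope i"
proof (cases "M1 i")
  case True
  then have "i \<in> observed_treated" using assms observed_treated_iff by blast
  then show ?thesis
    using assms by (simp add: imputed_observed_treated envelope_observed)
next
  case False
  then show ?thesis
    using assms by (cases mech) (simp_all add: Ytilde_def obsM_def Y0_envelope_def)
qed

lemma swap_le:
  assumes "i \<in> large_effect - shifted" "l \<in> shifted - large_effect"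
  shows "(imputed i, i) \<le> (envelope l, l)"
proof -
  have l: "l \<in> observed_treated" using assms(2) shifted_subset by blast
  have "preceq (obsY Y1 Y0 Z) i l" using assms by (intro preceq_of_notin_JL) auto
  then have "(Y1 i - c, i) \<le> (Y1 l - c, l)"
    using assms l by (auto simp: preceq_iff obsY_def observed_treated_iff)
  also have "\<dots> \<le> (Y0 l, l)" using assms(2) l by auto
  finally show ?thesis
    using assms l by (auto simp: imputed_observed_treated envelope_observed)
qed

lemma shifted_below_observed_controls:
  assumes i: "i \<in> shifted" and l: "l \<in> observed_treated" and j: "j \<in> {..<n} - Z"
    and le: "imputed j \<le> imputed i"
  shows "envelope j < envelope l"
proof -
  have iJ: "i \<in> observed_treated" using i shifted_subset by blast
  then have imputed_i: "imputed i = ereal (Y1 i - shift)"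
    using i by (simp add: imputed_observed_treated)
  show ?thesis
  proof (cases "M0 j")
    case True
    let ?Y = "obsY Y1 Y0 Z" and ?C = "{l. l < n \<and> l \<notin> Z \<and> obsM M1 M0 Z l}"
    have "Min (?Y ` ?C) \<le> Y0 j"
      using True j Min_le[of "?Y ` ?C" "?Y j"] by (auto simp: obsM_def obsY_def)
    moreover have "Y1 i \<le> Max (?Y ` observed_treated)"
      using iJ Max_ge[of "?Y ` observed_treated" "?Y i"] by (auto simp: obsY_def Jset_def)
    ultimately have "imputed i < imputed j"
      using True j kappa_pos imputed_i by (simp add: imputed_control)
    then show ?thesis using le by simp
  next
    case False
    then have "imputed j = (case mech of Mech_g \<Rightarrow> PInfty | Mech_mp \<Rightarrow> PInfty | Mech_mn \<Rightarrow> MInfty)"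
      using j by (simp add: imputed_control)
    then have "mech = Mech_mn" using le imputed_i by (cases mech) auto
    then have "envelope j = MInfty" using False by (simp add: Y0_envelope_def)
    then show ?thesis using envelope_observed[OF l] by simp
  qed
qed

lemma card_large_effect_le:
  assumes "Hnull n n1 Y1 Y0 k c Z"
  shows "card large_effect \<le> card shifted"
proof -
  have fin: "finite observed_treated" by (simp add: Jset_def)
  have "large_effect \<subseteq> {i. i < n \<and> i \<in> Z \<and> Y1 i - Y0 i > c}"
    using treated observed_treated_iff by auto
  then have "card large_effect \<le> card {i. i < n \<and> i \<in> Z \<and> Y1 i - Y0 i > c}"
    by (intro card_mono) auto
  also have "\<dots> \<le> n1 - k" using assms unfolding Hnull_def .
  finally have "card large_effect \<le> n1 - k" .
  moreover have "card large_effect \<le> card observed_treated" using fin by (intro card_mono) auto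
  ultimately show ?thesis by (simp add: card_JL)
qed

lemma tstat_imputed_le_envelope:
  assumes "Hnull n n1 Y1 Y0 k c Z" "mono phi"
  shows "tstat form phi n Z imputed \<le> tstat form phi n Z envelope"
proof (rule tstat_le_of_exchange[OF treated assms(2)])
  show "large_effect \<subseteq> Z" "shifted \<subseteq> Z"
    using shifted_subset observed_treated_iff by auto
  show "card large_effect \<le> card shifted" using assms(1) by (rule card_large_effect_le)
next
  fix i l j assume "i \<in> shifted" "l \<in> large_effect \<union> shifted" "j \<in> {..<n} - Z"
    "imputed j \<le> imputed i"
  moreover have "l \<in> observed_treated" using \<open>l \<in> large_effect \<union> shifted\<close> shifted_subset by blast
  ultimately show "envelope j < envelope l" using shifted_below_observed_controls by blast
qed (fact envelope_le_imputed_control imputed_le_envelope swap_le)+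

end

lemma finite_cre_space: "finite (cre_space n n1)"
  by (rule finite_subset[of _ "Pow {..<n}"]) (auto simp: cre_space_def)

lemma prob_cre_mono:
  assumes "\<And>Z. Z \<in> cre_space n n1 \<Longrightarrow> P Z \<Longrightarrow> Q Z"
  shows "prob_cre n n1 P \<le> prob_cre n n1 Q"
proof -
  have "card {Z\<in>cre_space n n1. P Z} \<le> card {Z\<in>cre_space n n1. Q Z}"
    using assms finite_cre_space by (intro card_mono) auto
  then show ?thesis unfolding prob_cre_def by (simp add: divide_right_mono)
qed

lemma prob_cre_tail_valid:
  fixes T :: "nat set \<Rightarrow> 'a::linorder"
  assumes "0 \<le> alpha"
  shows "prob_cre n n1 (\<lambda>Z. prob_cre n n1 (\<lambda>A. T Z \<le> T A) \<le> alpha) \<le> alpha"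
proof (cases "\<exists>Z\<in>cre_space n n1. prob_cre n n1 (\<lambda>A. T Z \<le> T A) \<le> alpha")
  case True
  let ?S = "{Z\<in>cre_space n n1. prob_cre n n1 (\<lambda>A. T Z \<le> T A) \<le> alpha}"
  have fin: "finite (T ` ?S)" using finite_cre_space by simp
  have "T ` ?S \<noteq> {}" using True by blast
  with fin have "Min (T ` ?S) \<in> T ` ?S" by (rule Min_in)
  then obtain Z0 where min: "Min (T ` ?S) = T Z0" and Z0: "Z0 \<in> ?S" by (rule imageE)
  have Z0_min: "T Z0 \<le> T Z" if "Z \<in> ?S" for Z
    unfolding min[symmetric] using fin that by simp
  have "prob_cre n n1 (\<lambda>Z. prob_cre n n1 (\<lambda>A. T Z \<le> T A) \<le> alpha) \<le> prob_cre n n1 (\<lambda>A. T Z0 \<le> T A)"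
    using Z0_min by (intro prob_cre_mono) simp
  also have "\<dots> \<le> alpha" using Z0 by simp
  finally show ?thesis .
next
  case False
  then have "prob_cre n n1 (\<lambda>Z. prob_cre n n1 (\<lambda>A. T Z \<le> T A) \<le> alpha) \<le> prob_cre n n1 (\<lambda>_. False)"
    by (intro prob_cre_mono) simp
  also have "\<dots> = 0" by (simp add: prob_cre_def)
  finally show ?thesis using assms by linarith
qed

theorem theorem6:
  fixes n n1 k :: nat and Y1 Y0 :: "nat \<Rightarrow> real" and M1 M0 :: "nat \<Rightarrow> bool"
    and mech :: mechanism and form :: stat_form and phi :: "nat \<Rightarrow> real"
    and y0 :: "nat \<Rightarrow> real" and c kappa alpha :: real
  assumes "0 < n1" and "n1 < n"
    and "mono phi"
    and "mech = Mech_mp \<longrightarrow> (\<forall>i<n. M0 i \<longrightarrow> M1 i)"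
    and "mech = Mech_mn \<longrightarrow> (\<forall>i<n. M1 i \<longrightarrow> M0 i)"
    and "1 \<le> k" and "k \<le> n1"
    and "kappa > 0"
    and "0 < alpha" and "alpha < 1"
  shows "prob_cre n n1 (\<lambda>Z. pval form phi mech n n1 y0 Y1 Y0 M1 M0 kappa k c Z \<le> alpha
                              \<and> Hnull n n1 Y1 Y0 k c Z) \<le> alpha"
proof -
  define T where "T A = tstat form phi n A (Y0_envelope mech Y0 M1 M0)" for A
  have "prob_cre n n1 (\<lambda>A. T Z \<le> T A) \<le> pval form phi mech n n1 y0 Y1 Y0 M1 M0 kappa k c Z"
    if Z: "Z \<in> cre_space n n1" and H: "Hnull n n1 Y1 Y0 k c Z" for Z
  proof -
    interpret imputation n n1 k Y1 Y0 M1 M0 mech kappa c Z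
      using Z assms by unfold_locales (auto simp: cre_space_def)
    have "tstat form phi n Z imputed \<le> T Z"
      unfolding T_def using H assms(3) by (rule tstat_imputed_le_envelope)
    then show ?thesis
      unfolding pval_def G_tail_def T_def
      by (subst prob_cre_tstat_invariant) (auto intro: prob_cre_mono order_trans)
  qed
  then have "prob_cre n n1 (\<lambda>Z. pval form phi mech n n1 y0 Y1 Y0 M1 M0 kappa k c Z \<le> alpha
                              \<and> Hnull n n1 Y1 Y0 k c Z)
      \<le> prob_cre n n1 (\<lambda>Z. prob_cre n n1 (\<lambda>A. T Z \<le> T A) \<le> alpha)"
    by (intro prob_cre_mono) (meson order_trans)
  also have "\<dots> \<le> alpha" using assms(9) by (intro prob_cre_tail_valid) simp
  finally show ?thesis .
qed

end
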